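(* Let $T>0$, let $V>0$ and $R\ge 2V$ be constants, and let $H:[0,T]\times\mathbb R^{D_{L-1}}\times\mathbb R^{D_L}\to\mathbb R^{D_{L-1}}$ be continuous and such that: (1) $|H|\le V$ everywhere; (2) for each fixed $t\in[0,T]$ and $a^{(L-1)}\in\mathbb R^{D_{L-1}}$, the map $a^{(L)}\mapsto H(t,a^{(L-1)},a^{(L)})$ is $Ve^{Rt}$-Lipschitz; (3) for each fixed $t\in[0,T]$ and $a^{(L)}\in\mathbb R^{D_L}$, the map $a^{(L-1)}\mapsto H(t,a^{(L-1)},a^{(L)})$ is $V$-Lipschitz. For $a=(a^{(L-1)},a^{(L)})$ let $G(a)\in C([0,T],\mathbb R^{D_{L-1}})$ be the solution of $x(0)=a^{(L-1)}$, $x'(t)=H(t,x(t),a^{(L)})$, $t\in[0,T]$. Then $G$ is an $R$-special function.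
   Context: Here $D_{L-1},D_L\ge1$ are integers. A map $F:\mathbb R^{D_{L-1}}\times\mathbb R^{D_L}\to C([0,T],\mathbb R^{D_{L-1}})$ is $R$-special if (1) for each $a=(a^{(L-1)},a^{(L)})$, $t\mapsto F(a)(t)$ is $R$-Lipschitz and $F(a)(0)=a^{(L-1)}$; and (2) for each $t\in[0,T]$, the map $a\mapsto F(a)(t)$ is $e^{Rt}$-Lipschitz (Euclidean norms). *)

theory Defs
  imports "HOL-Analysis.Analysis"
begin

text \<open>The dimensions are the euclidean_space type variables 'a, 'b; the norm on
  the product type 'a \<times> 'b is the Euclidean norm sqrt(|x|^2+|y|^2).
  Elements of C([0,T],R^D) are represented as functions real => 'a continuous on [0,T].\<close>
definition R_special :: "real \<Rightarrow> real \<Rightarrow> ('a::euclidean_space \<times> 'b::euclidean_space \<Rightarrow> real \<Rightarrow> 'a) \<Rightarrow> bool" where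
  "R_special T R F \<longleftrightarrow>
     (\<forall>a. continuous_on {0..T} (F a)
          \<and> R-lipschitz_on {0..T} (F a)
          \<and> F a 0 = fst a)
   \<and> (\<forall>t\<in>{0..T}. (exp (R * t))-lipschitz_on UNIV (\<lambda>a. F a t))"

end

theory Submission
  imports Defs
begin

text \<open>Since |H| \<le> V \<le> R, every solution moves with speed at most R. For two parameters
  a, b put p = |a^(L-1) - b^(L-1)| and q = |a^(L) - b^(L)|; by the two Lipschitz conditions the
  difference d of the solutions satisfies |d'| \<le> V |d| + V e^(R s) q. Because R - V \<ge> V, the
  function e^(V s) p + (e^(R s) - e^(V s)) q is a supersolution of this differential inequality,
  so by comparison it bounds |d(t)|, and it is at most e^(R t) max(p, q) \<le> e^(R t) |a - b|.\<close>

lemma bounded_vector_derivative_imp_lipschitz: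
  fixes f :: "real \<Rightarrow> 'a::real_normed_vector"
  assumes "convex S"
    and "\<And>x. x \<in> S \<Longrightarrow> (f has_vector_derivative f' x) (at x within S)"
    and "\<And>x. x \<in> S \<Longrightarrow> norm (f' x) \<le> B" "0 \<le> B"
  shows "B-lipschitz_on S f"
proof (rule bounded_derivative_imp_lipschitz[where f' = "\<lambda>x h. h *\<^sub>R f' x"])
  show "(f has_derivative (\<lambda>h. h *\<^sub>R f' x)) (at x within S)" if "x \<in> S" for x
    using assms(2)[OF that] by (simp add: has_vector_derivative_def)
  show "onorm (\<lambda>h. h *\<^sub>R f' x) \<le> B" if "x \<in> S" for x
    using assms(3)[OF that] by (simp add: onorm_scaleR_left[OF bounded_linear_ident] onorm_id)
qed (use assms in auto)

lemma smoothed_norm_has_real_derivative: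
  fixes d :: "real \<Rightarrow> 'a::real_inner"
  assumes "(d has_vector_derivative v) (at s)" "\<delta> \<noteq> 0"
  shows "((\<lambda>s. sqrt ((norm (d s))\<^sup>2 + \<delta>\<^sup>2)) has_real_derivative
           (d s \<bullet> v) / sqrt ((norm (d s))\<^sup>2 + \<delta>\<^sup>2)) (at s)"
proof -
  have "((\<lambda>s. d s \<bullet> d s) has_real_derivative 2 * (d s \<bullet> v)) (at s)"
    using assms(1) unfolding has_vector_derivative_def has_field_derivative_def
    by (auto intro!: derivative_eq_intros simp: inner_commute algebra_simps)
  moreover have "0 < (norm (d s))\<^sup>2 + \<delta>\<^sup>2"
    using assms(2) by (simp add: add_nonneg_pos)
  ultimately show ?thesis
    unfolding power2_norm_eq_inner
    by (auto intro!: derivative_eq_intros simp: field_simps)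
qed

lemma differential_inequality_norm_le:
  fixes d :: "real \<Rightarrow> 'a::real_inner" and w :: "real \<Rightarrow> real"
  assumes "a \<le> b" "0 \<le> L"
    and d_cont: "continuous_on {a..b} d" and w_cont: "continuous_on {a..b} w"
    and d_der: "\<And>s. a < s \<Longrightarrow> s < b \<Longrightarrow> (d has_vector_derivative d' s) (at s)"
    and w_der: "\<And>s. a < s \<Longrightarrow> s < b \<Longrightarrow> (w has_real_derivative w' s) (at s)"
    and super: "\<And>s. a < s \<Longrightarrow> s < b \<Longrightarrow> norm (d' s) - L * norm (d s) \<le> w' s - L * w s"
    and init: "norm (d a) \<le> w a"
  shows "norm (d b) \<le> w b"
proof (rule field_le_epsilon)
  fix e :: real
  assume "0 < e"
  define \<delta> where "\<delta> = e * exp (- (L * (b - a)))"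
  have "0 < \<delta>"
    using \<open>0 < e\<close> by (simp add: \<delta>_def)
  txt \<open>The norm of d is not differentiable where d vanishes, so the comparison is made with
    the smoothed norm N; the weight e^(-L s) turns it into monotonicity of z.\<close>
  define N where "N s = sqrt ((norm (d s))\<^sup>2 + \<delta>\<^sup>2)" for s
  have norm_le_N: "norm (d s) \<le> N s" for s
    unfolding N_def by (simp add: real_le_rsqrt)
  have N_pos: "0 < N s" for s
    unfolding N_def using \<open>0 < \<delta>\<close> by (simp add: add_nonneg_pos)
  define z where "z s = (N s - w s) * exp (- (L * s))" for s
  have "z b \<le> z a"
  proof (rule DERIV_nonpos_imp_decreasing_open[OF \<open>a \<le> b\<close>])
    show "continuous_on {a..b} z"
      unfolding z_def N_def by (intro continuous_intros d_cont w_cont)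
    fix s
    assume s: "a < s" "s < b"
    define N' where "N' = (d s \<bullet> d' s) / N s"
    have "(N has_real_derivative N') (at s)"
      unfolding N_def[abs_def] N'_def N_def
      using smoothed_norm_has_real_derivative[OF d_der[OF s]] \<open>0 < \<delta>\<close> by simp
    then have "(z has_real_derivative (N' - w' s - L * (N s - w s)) * exp (- (L * s))) (at s)"
      unfolding z_def[abs_def]
      by (auto intro!: derivative_eq_intros w_der[OF s] simp: algebra_simps)
    moreover have "N' \<le> norm (d' s)"
    proof -
      have "N' \<le> norm (d s) * norm (d' s) / N s"
        unfolding N'_def using N_pos[of s]
        by (intro divide_right_mono) (auto intro: order_trans[OF _ norm_cauchy_schwarz])
      also have "\<dots> \<le> norm (d' s)"
        using N_pos[of s] mult_right_mono[OF norm_le_N norm_ge_zero, of s "d' s"]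
        by (simp add: divide_le_eq mult.commute)
      finally show ?thesis .
    qed
    moreover have "L * norm (d s) \<le> L * N s"
      using norm_le_N \<open>0 \<le> L\<close> by (simp add: mult_left_mono)
    ultimately show "\<exists>z'. (z has_real_derivative z') (at s) \<and> z' \<le> 0"
      using super[OF s] by (intro exI conjI) (auto intro!: mult_nonpos_nonneg simp: right_diff_distrib)
  qed
  moreover have "N a \<le> norm (d a) + \<delta>"
    unfolding N_def using \<open>0 < \<delta>\<close>
    by (intro real_le_lsqrt) (auto simp: power2_sum)
  ultimately have "(N b - w b) * exp (- (L * b)) \<le> \<delta> * exp (- (L * a))"
    using init unfolding z_def by (smt (verit) exp_gt_zero mult_right_mono)
  also have "\<delta> * exp (- (L * a)) = e * exp (- (L * b))"
    by (simp add: \<delta>_def mult.assoc flip: exp_add) (simp add: algebra_simps)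
  finally have "N b - w b \<le> e"
    by (simp add: mult_le_cancel_right_pos)
  then show "norm (d b) \<le> w b + e"
    using norm_le_N[of b] by simp
qed

lemma ode_solutions_dist_le:
  fixes H :: "real \<Rightarrow> 'a::real_inner \<Rightarrow> 'b::real_normed_vector \<Rightarrow> 'a"
  assumes "0 \<le> V" "2 * V \<le> R" "t \<in> {0..T}"
    and H_lip_last: "\<And>s x. s \<in> {0..T} \<Longrightarrow> (V * exp (R * s))-lipschitz_on UNIV (\<lambda>u. H s x u)"
    and H_lip_first: "\<And>s u. s \<in> {0..T} \<Longrightarrow> V-lipschitz_on UNIV (\<lambda>x. H s x u)"
    and x_cont: "continuous_on {0..T} x" and y_cont: "continuous_on {0..T} y"
    and x_ode: "\<And>s. s \<in> {0..T} \<Longrightarrow> (x has_vector_derivative H s (x s) u) (at s within {0..T})"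
    and y_ode: "\<And>s. s \<in> {0..T} \<Longrightarrow> (y has_vector_derivative H s (y s) v) (at s within {0..T})"
  shows "norm (x t - y t) \<le>
           exp (V * t) * norm (x 0 - y 0) + (exp (R * t) - exp (V * t)) * norm (u - v)"
proof (rule differential_inequality_norm_le[where a = 0 and b = t and L = V
      and d = "\<lambda>s. x s - y s" and d' = "\<lambda>s. H s (x s) u - H s (y s) v"
      and w = "\<lambda>s. exp (V * s) * norm (x 0 - y 0) + (exp (R * s) - exp (V * s)) * norm (u - v)"
      and w' = "\<lambda>s. V * exp (V * s) * norm (x 0 - y 0)
                    + (R * exp (R * s) - V * exp (V * s)) * norm (u - v)"])
  show "continuous_on {0..t} (\<lambda>s. x s - y s)"
    using \<open>t \<in> {0..T}\<close> by (intro continuous_on_diff continuous_on_subset[OF x_cont]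
        continuous_on_subset[OF y_cont]) auto
  fix s
  assume s: "0 < s" "s < t"
  then have "s \<in> {0..T}"
    using \<open>t \<in> {0..T}\<close> by auto
  have "at s within {0..T} = at s"
    using s \<open>t \<in> {0..T}\<close> by (intro at_within_Icc_at) auto
  then show "((\<lambda>s. x s - y s) has_vector_derivative H s (x s) u - H s (y s) v) (at s)"
    using has_vector_derivative_diff[OF x_ode y_ode, OF \<open>s \<in> {0..T}\<close> \<open>s \<in> {0..T}\<close>] by simp
  have "norm (H s (x s) u - H s (y s) v)
          \<le> norm (H s (x s) u - H s (y s) u) + norm (H s (y s) u - H s (y s) v)"
    by (rule norm_diff_triangle_le[where y = "H s (y s) u"]) simp_all
  also have "\<dots> \<le> V * norm (x s - y s) + V * exp (R * s) * norm (u - v)"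
    using lipschitz_onD[OF H_lip_first[OF \<open>s \<in> {0..T}\<close>], of "x s" "y s" u]
      lipschitz_onD[OF H_lip_last[OF \<open>s \<in> {0..T}\<close>], of u v "y s"]
    by (auto simp: dist_norm intro: add_mono)
  also have "\<dots> \<le> V * norm (x s - y s) + (R - V) * exp (R * s) * norm (u - v)"
    using \<open>2 * V \<le> R\<close> by (intro add_left_mono mult_right_mono) auto
  finally show "norm (H s (x s) u - H s (y s) v) - V * norm (x s - y s)
      \<le> V * exp (V * s) * norm (x 0 - y 0) + (R * exp (R * s) - V * exp (V * s)) * norm (u - v)
        - V * (exp (V * s) * norm (x 0 - y 0) + (exp (R * s) - exp (V * s)) * norm (u - v))"
    by (simp add: algebra_simps)
qed (use assms in \<open>auto intro!: derivative_eq_intros continuous_intros\<close>)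

theorem proposition8p8:
  fixes H :: "real \<Rightarrow> 'a::euclidean_space \<Rightarrow> 'b::euclidean_space \<Rightarrow> 'a"
    and G :: "'a \<times> 'b \<Rightarrow> real \<Rightarrow> 'a"
    and T V R :: real
  assumes T_pos: "T > 0"
    and V_pos: "V > 0"
    and R_ge: "R \<ge> 2 * V"
    and H_cont: "continuous_on ({0..T} \<times> UNIV \<times> UNIV) (\<lambda>(t, x, y). H t x y)"
    and H_bound: "\<And>t x y. t \<in> {0..T} \<Longrightarrow> norm (H t x y) \<le> V"
    and H_lip_last: "\<And>t x. t \<in> {0..T} \<Longrightarrow> (V * exp (R * t))-lipschitz_on UNIV (\<lambda>y. H t x y)"
    and H_lip_first: "\<And>t y. t \<in> {0..T} \<Longrightarrow> V-lipschitz_on UNIV (\<lambda>x. H t x y)"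
    and G_cont: "\<And>a. continuous_on {0..T} (G a)"
    and G_init: "\<And>a. G a 0 = fst a"
    and G_ode: "\<And>a t. t \<in> {0..T} \<Longrightarrow>
                  (G a has_vector_derivative H t (G a t) (snd a)) (at t within {0..T})"
  shows "R_special T R G"
  unfolding R_special_def
proof (intro conjI allI ballI)
  fix a :: "'a \<times> 'b"
  show "continuous_on {0..T} (G a)" "G a 0 = fst a"
    by (fact G_cont G_init)+
  have "V-lipschitz_on {0..T} (G a)"
    using G_ode H_bound V_pos
    by (intro bounded_vector_derivative_imp_lipschitz[where f' = "\<lambda>t. H t (G a t) (snd a)"]) auto
  then show "R-lipschitz_on {0..T} (G a)"
    by (rule lipschitz_on_mono) (use R_ge V_pos in auto)
next
  fix t :: real
  assume t: "t \<in> {0..T}"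
  show "(exp (R * t))-lipschitz_on UNIV (\<lambda>a. G a t)"
  proof (rule lipschitz_onI)
    fix a b :: "'a \<times> 'b"
    have "dist (G a t) (G b t) \<le> exp (V * t) * norm (fst a - fst b)
                                   + (exp (R * t) - exp (V * t)) * norm (snd a - snd b)"
      using ode_solutions_dist_le[OF _ R_ge t H_lip_last H_lip_first G_cont G_cont G_ode G_ode]
        V_pos by (simp add: dist_norm G_init)
    also have "\<dots> \<le> exp (V * t) * dist a b + (exp (R * t) - exp (V * t)) * dist a b"
      using dist_fst_le[of a b] dist_snd_le[of a b] mult_right_mono[of V R t] R_ge V_pos t
      by (intro add_mono mult_left_mono) (auto simp: dist_norm)
    also have "\<dots> = exp (R * t) * dist a b"
      by (simp add: algebra_simps)
    finally show "dist (G a t) (G b t) \<le> exp (R * t) * dist a b" .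
  qed simp
qed

end
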